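(* For any integers $i\ge1$ and $w\ge0$ and every $j\in\{0,\dots,w\}$, it holds that $\mathcal{P}_i[j]=\max_{a+b=j,\ a,b\ge0}\big(\mathcal{P}_{i-1}[a]+\mathcal{P}_{i-1}[b]\big)$; that is, $\mathcal{P}_i[0..w]$ coincides with the first $w+1$ entries of the $(\max,+)$-convolution of $\mathcal{P}_{i-1}[0..w]$ with itself.
   Context: Fix an \textsc{Unbounded Knapsack} instance: items $(p_1,w_1),\dots,(p_n,w_n)$ with $p_k,w_k\in\mathbb{N}$ and capacity $W$. For $x\in\mathbb{N}^n$: $p(x)=\sum_kp_kx_k$, $w(x)=\sum_kw_kx_k$, $\|x\|_1=\sum_kx_k$. For an integer $i\ge0$ and $j\ge0$, $\mathcal{P}_i[j]:=\max\{p(x): x\in\mathbb{N}^n,\ w(x)\le j,\ \|x\|_1\le2^i\}$. The $(\max,+)$-convolution of $A[0..n],B[0..n]$ is $C[k]=\max_{i+j=k}A[i]+B[j]$. *)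

theory Defs
  imports Main
begin

text \<open>An Unbounded Knapsack instance with n items is given by two lists ps, ws of
natural numbers of the same length n (profits p_k = ps!k and weights w_k = ws!k).\<close>

definition profit :: "nat list \<Rightarrow> nat list \<Rightarrow> nat" where
  "profit ps x = (\<Sum>k<length ps. ps ! k * x ! k)"

definition weight :: "nat list \<Rightarrow> nat list \<Rightarrow> nat" where
  "weight ws x = (\<Sum>k<length ws. ws ! k * x ! k)"

definition norm1 :: "nat list \<Rightarrow> nat" where
  "norm1 x = sum_list x"

definition Ptab :: "nat list \<Rightarrow> nat list \<Rightarrow> nat \<Rightarrow> nat \<Rightarrow> nat" where
  "Ptab ps ws i j = Max {profit ps x | x. length x = length ps \<and> weight ws x \<le> j \<and> norm1 x \<le> 2 ^ i}"

definition maxplus_conv :: "(nat \<Rightarrow> nat) \<Rightarrow> (nat \<Rightarrow> nat) \<Rightarrow> nat \<Rightarrow> nat" where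
  "maxplus_conv A B k = Max {A a + B b | a b. a + b = k}"

end

theory Submission
  imports Defs
begin

text \<open>A solution with at most c1 + c2 items splits componentwise into one with at most c1 and
one with at most c2 items, and profits and weights add up; conversely the componentwise sum of
two solutions is a solution. Hence the table for the item bound c1 + c2 is the
(max,+)-convolution of the tables for c1 and c2; the lemma is the case c1 = c2 = 2^(i-1).\<close>

lemma maxplus_conv_eqI:
  assumes "\<And>a b. a + b = k \<Longrightarrow> A a + B b \<le> c"
    and "a + b = k" and "A a + B b = c"
  shows "maxplus_conv A B k = c"
proof -
  have "{A a + B b | a b. a + b = k} \<subseteq> (\<lambda>a. A a + B (k - a)) ` {..k}"
    by (clarsimp simp: image_iff) (metis add_diff_cancel_left' atMost_iff le_add1)
  then have "finite {A a + B b | a b. a + b = k}"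
    by (rule finite_subset) simp
  then show ?thesis
    unfolding maxplus_conv_def using assms by (intro Max_eqI) auto
qed

lemma sum_list_map2_plus:
  fixes y z :: "'a::comm_monoid_add list"
  shows "length y = length z \<Longrightarrow> sum_list (map2 (+) y z) = sum_list y + sum_list z"
  by (induction y z rule: list_induct2) (simp_all add: ac_simps)

lemma sum_lessThan_mult_map2_plus:
  fixes y z :: "'a::comm_semiring_0 list"
  assumes "n \<le> length y" and "n \<le> length z"
  shows "(\<Sum>k<n. c k * map2 (+) y z ! k) = (\<Sum>k<n. c k * y ! k) + (\<Sum>k<n. c k * z ! k)"
  using assms by (simp add: distrib_left sum.distrib)

lemma sum_list_le_add_split:
  fixes x :: "nat list"
  assumes "sum_list x \<le> m\<^sub>1 + m\<^sub>2"
  obtains y z where "length y = length x" and "length z = length x" and "map2 (+) y z = x"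
    and "sum_list y \<le> m\<^sub>1" and "sum_list z \<le> m\<^sub>2"
  using assms
proof (induction x arbitrary: m\<^sub>1 m\<^sub>2 thesis)
  case Nil
  then show ?case by simp
next
  case (Cons a x)
  define b where "b = min a m\<^sub>1"
  have "sum_list x \<le> (m\<^sub>1 - b) + (m\<^sub>2 - (a - b))"
    using Cons.prems(2) by (simp add: b_def)
  then obtain y z where "length y = length x" "length z = length x" "map2 (+) y z = x"
    "sum_list y \<le> m\<^sub>1 - b" "sum_list z \<le> m\<^sub>2 - (a - b)"
    using Cons.IH by blast
  moreover have "b \<le> m\<^sub>1" "a - b \<le> m\<^sub>2" "b + (a - b) = a"
    using Cons.prems(2) by (auto simp: b_def)
  ultimately show ?case
    by (intro Cons.prems(1)[of "b # y" "(a - b) # z"]) auto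
qed

lemma finite_sum_list_bounded:
  "finite {x :: nat list. length x = n \<and> sum_list x \<le> m}"
proof (rule finite_subset)
  show "{x. length x = n \<and> sum_list x \<le> m} \<subseteq> {x. set x \<subseteq> {0..m} \<and> length x = n}"
    using member_le_sum_list by fastforce
  show "finite {x. set x \<subseteq> {0..m} \<and> length x = n}"
    by (rule finite_lists_length_eq) simp
qed

lemma profit_map2_plus:
  "length y = length ps \<Longrightarrow> length z = length ps \<Longrightarrow>
    profit ps (map2 (+) y z) = profit ps y + profit ps z"
  unfolding profit_def by (intro sum_lessThan_mult_map2_plus) simp_all

lemma weight_map2_plus:
  "length y = length ws \<Longrightarrow> length z = length ws \<Longrightarrow>
    weight ws (map2 (+) y z) = weight ws y + weight ws z"
  unfolding weight_def by (intro sum_lessThan_mult_map2_plus) simp_all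

definition feasible :: "nat list \<Rightarrow> nat list \<Rightarrow> nat \<Rightarrow> nat \<Rightarrow> nat list set" where
  "feasible ps ws c j = {x. length x = length ps \<and> weight ws x \<le> j \<and> norm1 x \<le> c}"

definition max_profit :: "nat list \<Rightarrow> nat list \<Rightarrow> nat \<Rightarrow> nat \<Rightarrow> nat" where
  "max_profit ps ws c j = Max (profit ps ` feasible ps ws c j)"

lemma Ptab_eq_max_profit: "Ptab ps ws i j = max_profit ps ws (2 ^ i) j"
  unfolding Ptab_def max_profit_def feasible_def by (rule arg_cong[where f = Max]) blast

lemma finite_feasible: "finite (feasible ps ws c j)"
  by (rule finite_subset[OF _ finite_sum_list_bounded[of "length ps" c]])
    (auto simp: feasible_def norm1_def)

lemma profit_le_max_profit: "x \<in> feasible ps ws c j \<Longrightarrow> profit ps x \<le> max_profit ps ws c j"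
  unfolding max_profit_def using finite_feasible by auto

lemma max_profit_attained:
  assumes "length ps = length ws"
  obtains x where "x \<in> feasible ps ws c j" and "profit ps x = max_profit ps ws c j"
proof -
  have "replicate (length ps) 0 \<in> feasible ps ws c j"
    using assms by (simp add: feasible_def norm1_def weight_def sum_list_replicate)
  then have "max_profit ps ws c j \<in> profit ps ` feasible ps ws c j"
    unfolding max_profit_def using finite_feasible by (intro Max_in) auto
  then show ?thesis using that by auto
qed

lemma max_profit_superadditive:
  assumes "length ps = length ws"
  shows "max_profit ps ws c\<^sub>1 a + max_profit ps ws c\<^sub>2 b \<le> max_profit ps ws (c\<^sub>1 + c\<^sub>2) (a + b)"
proof -
  obtain y where y: "y \<in> feasible ps ws c\<^sub>1 a" "profit ps y = max_profit ps ws c\<^sub>1 a"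
    using max_profit_attained[OF assms] .
  obtain z where z: "z \<in> feasible ps ws c\<^sub>2 b" "profit ps z = max_profit ps ws c\<^sub>2 b"
    using max_profit_attained[OF assms] .
  have lengths: "length y = length ps" "length z = length ps"
    using y(1) z(1) by (simp_all add: feasible_def)
  have "map2 (+) y z \<in> feasible ps ws (c\<^sub>1 + c\<^sub>2) (a + b)"
    using y(1) z(1) lengths assms
    by (simp add: feasible_def norm1_def sum_list_map2_plus weight_map2_plus add_mono)
  then have "profit ps (map2 (+) y z) \<le> max_profit ps ws (c\<^sub>1 + c\<^sub>2) (a + b)"
    by (rule profit_le_max_profit)
  then show ?thesis
    using y(2) z(2) lengths by (simp add: profit_map2_plus)
qed

lemma max_profit_split:
  assumes "length ps = length ws"
  obtains a b where "a + b = j"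
    and "max_profit ps ws (c\<^sub>1 + c\<^sub>2) j \<le> max_profit ps ws c\<^sub>1 a + max_profit ps ws c\<^sub>2 b"
proof -
  obtain x where x: "x \<in> feasible ps ws (c\<^sub>1 + c\<^sub>2) j" "profit ps x = max_profit ps ws (c\<^sub>1 + c\<^sub>2) j"
    using max_profit_attained[OF assms] .
  then have "sum_list x \<le> c\<^sub>1 + c\<^sub>2"
    by (simp add: feasible_def norm1_def)
  then obtain y z where yz: "length y = length x" "length z = length x" "map2 (+) y z = x"
    "sum_list y \<le> c\<^sub>1" "sum_list z \<le> c\<^sub>2"
    by (rule sum_list_le_add_split)
  have lengths: "length y = length ps" "length z = length ps"
    using x(1) yz(1,2) by (simp_all add: feasible_def)
  define a where "a = weight ws y"
  have weight_x: "weight ws x = a + weight ws z"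
    unfolding a_def yz(3)[symmetric] using lengths assms by (simp add: weight_map2_plus)
  have "y \<in> feasible ps ws c\<^sub>1 a" "z \<in> feasible ps ws c\<^sub>2 (j - a)"
    using x(1) yz(4,5) lengths weight_x by (auto simp: feasible_def norm1_def a_def)
  then have "profit ps y + profit ps z \<le> max_profit ps ws c\<^sub>1 a + max_profit ps ws c\<^sub>2 (j - a)"
    by (intro add_mono profit_le_max_profit)
  moreover have "profit ps x = profit ps y + profit ps z"
    unfolding yz(3)[symmetric] using lengths by (rule profit_map2_plus)
  moreover have "a \<le> j"
    using x(1) weight_x by (simp add: feasible_def)
  ultimately show ?thesis
    using that[of a "j - a"] x(2) by simp
qed

theorem max_profit_add_eq_maxplus_conv:
  assumes "length ps = length ws"
  shows "max_profit ps ws (c\<^sub>1 + c\<^sub>2) j = maxplus_conv (max_profit ps ws c\<^sub>1) (max_profit ps ws c\<^sub>2) j"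
proof -
  obtain a b where ab: "a + b = j"
    and le: "max_profit ps ws (c\<^sub>1 + c\<^sub>2) j \<le> max_profit ps ws c\<^sub>1 a + max_profit ps ws c\<^sub>2 b"
    using max_profit_split[OF assms] .
  have "max_profit ps ws c\<^sub>1 a + max_profit ps ws c\<^sub>2 b \<le> max_profit ps ws (c\<^sub>1 + c\<^sub>2) j"
    if "a + b = j" for a b
    using max_profit_superadditive[OF assms] that by blast
  with ab le show ?thesis
    by (intro maxplus_conv_eqI[symmetric]) (auto intro: antisym)
qed

theorem lemma5p1:
  fixes ps ws :: "nat list" and i w j :: nat
  assumes "length ps = length ws"
    and "i \<ge> 1"
    and "j \<le> w"
  shows "Ptab ps ws i j = maxplus_conv (Ptab ps ws (i - 1)) (Ptab ps ws (i - 1)) j"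
proof -
  have "(2::nat) ^ i = 2 ^ (i - 1) + 2 ^ (i - 1)"
    using assms(2) by (cases i) simp_all
  then show ?thesis
    unfolding Ptab_eq_max_profit using max_profit_add_eq_maxplus_conv[OF assms(1)] by presburger
qed

end
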